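(* Let $p$ be a prime, let $e\geq2$ and $d\geq2$ be integers, let $\lambda\in\{1,\dots,\min(e,d-1)\}$, and let $\alpha=(\alpha_1,\dots,\alpha_d)\in\mathcal R_\lambda(d,e)$ with $\mu=\mu(\alpha)$. Let $\mathcal P(p^e,d)\subset\mathbb R^d$ be the convex hull of all $d$-dimensional vector-factorisations of $p^e$. Then the inequality $$\sum_{i=1}^dp^{\alpha_i} x_i\geq\lambda p^{\mu+1}+(d-\lambda)p^\mu$$ holds with equality on every element of the set $$S_\alpha=\Big\{(p^{\mu-\alpha_1+\epsilon_1},\dots,p^{\mu-\alpha_d+\epsilon_d})\ :\ (\epsilon_1,\dots,\epsilon_d)\in\{0,1\}^d,\ \textstyle\sum_i\epsilon_i=\lambda\Big\},$$ which is a set of vertices of $\mathcal P(p^e,d)$. The convex hull of $S_\alpha$ is a facet of $\mathcal P(p^e,d)$ which is affinely equivalent to the $(d-1)$-dimensional hypersimplex $\Delta(\lambda)$.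
   Context: $\mathbb N=\{0,1,2,\dots\}$. A $d$-dimensional vector-factorisation of $N\geq1$ is a vector $(v_1,\dots,v_d)\in\mathbb N^d$ with $v_1\cdots v_d=N$. $\mathcal R_\lambda(d,e)$ is the set of all $\alpha\in\mathbb N^d$ with $\min(\alpha_1,\dots,\alpha_d)=0$, $\max(\alpha_1,\dots,\alpha_d)\,d<e+\sum_i\alpha_i$ and $e+\sum_i\alpha_i\equiv\lambda\pmod d$; for such $\alpha$, $\mu(\alpha)$ is the integer with $\mu(\alpha)d+\lambda=e+\sum_i\alpha_i$. $\Delta(\lambda)=\mathrm{Conv}\{\epsilon\in\{0,1\}^d:\sum_i\epsilon_i=\lambda\}$ is the hypersimplex of parameter $\lambda$. *)

theory Defs
  imports "HOL-Analysis.Analysis" "HOL-Number_Theory.Cong"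
begin

text \<open>Dimension d is CARD('n); vectors in R^d are real^'n, vectors in N^d are nat^'n.\<close>

definition vec_factorisations :: "nat \<Rightarrow> (real^'n) set" where
  "vec_factorisations N =
     {x. \<exists>v::nat^'n. (\<Prod>i\<in>UNIV. v$i) = N \<and> x = (\<chi> i. real (v$i))}"

definition factorisation_polytope :: "nat \<Rightarrow> (real^'n) set" where
  "factorisation_polytope N = convex hull (vec_factorisations N)"

definition R_set :: "nat \<Rightarrow> nat \<Rightarrow> (nat^'n) set" where
  "R_set lam e = {\<alpha>. Min (range (\<lambda>i. \<alpha>$i)) = 0
      \<and> Max (range (\<lambda>i. \<alpha>$i)) * CARD('n) < e + (\<Sum>i\<in>UNIV. \<alpha>$i)
      \<and> [e + (\<Sum>i\<in>UNIV. \<alpha>$i) = lam] (mod CARD('n))}"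

definition mu_of :: "nat \<Rightarrow> nat \<Rightarrow> nat^'n \<Rightarrow> int" where
  "mu_of lam e \<alpha> = (int e + (\<Sum>i\<in>UNIV. int (\<alpha>$i)) - int lam) div int CARD('n)"

definition hypersimplex :: "nat \<Rightarrow> (real^'n) set" where
  "hypersimplex lam = convex hull
     {x. (\<forall>i. x$i \<in> {0,1}) \<and> (\<Sum>i\<in>UNIV. x$i) = real lam}"

definition S_alpha :: "nat \<Rightarrow> nat \<Rightarrow> nat \<Rightarrow> nat^'n \<Rightarrow> (real^'n) set" where
  "S_alpha p lam e \<alpha> =
     {x. \<exists>\<epsilon>::nat^'n. (\<forall>i. \<epsilon>$i \<in> {0,1}) \<and> (\<Sum>i\<in>UNIV. \<epsilon>$i) = lam \<and>
         x = (\<chi> i. real p powi (mu_of lam e \<alpha> - int (\<alpha>$i) + int (\<epsilon>$i)))}"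

definition affinely_equivalent :: "(real^'n) set \<Rightarrow> (real^'n) set \<Rightarrow> bool" where
  "affinely_equivalent A B \<longleftrightarrow>
     (\<exists>L c. linear L \<and> bij L \<and> (\<lambda>x. L x + c) ` A = B)"

end

theory Submission
  imports Defs
begin

text \<open>
  For q > 1 the function t \<mapsto> q^t is strictly convex, so it lies above its secant through
  m and m + 1 and meets it only there. Summing over the coordinates, natural exponents with
  k_1 + \<dots> + k_d = m d + \<lambda> satisfy \<Sum> q^k_i \<ge> \<lambda> q^(m+1) + (d - \<lambda>) q^m, with equality
  exactly when every k_i \<in> {m, m + 1}. The factorisations of p^e are the vectors (p^a_i) with
  \<Sum> a_i = e; taking k_i = \<alpha>_i + a_i shows that the inequality is valid on the polytope and
  that its face is spanned by the balanced factorisations, which are the points of S_\<alpha>,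
  the image of the vertices of \<Delta>(\<lambda>) under a diagonal affine map. That face has the
  dimension d - 1 of \<Delta>(\<lambda>), and some factorisation lies off the hyperplane, so it is a
  facet. Choosing \<alpha>_i = e - a_i and \<lambda> = 0 instead singles out the factorisation (p^a_i)
  alone, so every factorisation is a vertex.
\<close>

lemma power_secant_gap_above:
  fixes q :: "'a::comm_ring_1"
  shows "q ^ (m + j) - (q ^ m + of_nat j * (q ^ Suc m - q ^ m))
         = q ^ m * (q - 1) * (\<Sum>i<j. q ^ i - 1)"
proof -
  have "q ^ (m + j) - (q ^ m + of_nat j * (q ^ Suc m - q ^ m))
        = q ^ m * ((q ^ j - 1) - of_nat j * (q - 1))"
    by (simp add: power_add algebra_simps)
  also have "\<dots> = q ^ m * (q - 1) * ((\<Sum>i<j. q ^ i) - of_nat j)"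
    by (simp add: power_diff_1_eq algebra_simps)
  finally show ?thesis
    by (simp add: sum_subtractf)
qed

lemma power_secant_gap_below:
  fixes q :: "'a::comm_ring_1"
  shows "q ^ k - (q ^ (k + t) - of_nat t * (q ^ Suc (k + t) - q ^ (k + t)))
         = q ^ k * (q - 1) * (\<Sum>i<t. q ^ t - q ^ i)"
proof -
  have "q ^ k - (q ^ (k + t) - of_nat t * (q ^ Suc (k + t) - q ^ (k + t)))
        = q ^ k * (of_nat t * q ^ t * (q - 1) - (q ^ t - 1))"
    by (simp add: power_add algebra_simps)
  also have "\<dots> = q ^ k * (q - 1) * (of_nat t * q ^ t - (\<Sum>i<t. q ^ i))"
    by (simp add: power_diff_1_eq algebra_simps)
  finally show ?thesis
    by (simp add: sum_subtractf)
qed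

lemma power_secant_less:
  fixes q :: real
  assumes "1 < q" "k \<noteq> m" "k \<noteq> Suc m"
  shows "q ^ m + (real k - real m) * (q ^ Suc m - q ^ m) < q ^ k"
proof (cases "m \<le> k")
  case True
  define j where "j = k - m"
  have k: "k = m + j" and "2 \<le> j"
    using True assms(2,3) by (auto simp: j_def)
  have "0 < (\<Sum>i<j. q ^ i - 1)"
    using \<open>2 \<le> j\<close> assms(1) by (intro sum_pos2[where i = 1]) auto
  then have "0 < q ^ (m + j) - (q ^ m + real j * (q ^ Suc m - q ^ m))"
    unfolding power_secant_gap_above using assms(1) by simp
  then show ?thesis
    using k by simp
next
  case False
  define t where "t = m - k"
  have m: "m = k + t" and "0 < t"
    using False by (auto simp: t_def)
  have "0 < (\<Sum>i<t. q ^ t - q ^ i)"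
    using \<open>0 < t\<close> assms(1) by (intro sum_pos) (auto intro: power_strict_increasing)
  then have "0 < q ^ k - (q ^ (k + t) - real t * (q ^ Suc (k + t) - q ^ (k + t)))"
    unfolding power_secant_gap_below using assms(1) by simp
  then show ?thesis
    using m by (simp add: algebra_simps)
qed

lemma power_secant_le:
  fixes q :: real
  assumes "1 < q"
  shows "q ^ m + (real k - real m) * (q ^ Suc m - q ^ m) \<le> q ^ k"
proof (cases "k = m \<or> k = Suc m")
  case True
  then show ?thesis
    by (auto simp: algebra_simps)
next
  case False
  then show ?thesis
    using power_secant_less[OF assms, of k m] by simp
qed

text \<open>The value of \<Sum> q^k_i for n exponents summing to m n + l that are as equal as possible:
  l of them equal to m + 1 and the rest equal to m.\<close>
definition balanced_power_sum :: "real \<Rightarrow> nat \<Rightarrow> nat \<Rightarrow> nat \<Rightarrow> real" where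
  "balanced_power_sum q n l m = real l * q ^ Suc m + real (n - l) * q ^ m"

lemma sum_power_secants:
  assumes "finite I" "(\<Sum>i\<in>I. k i) = m * card I + l" "l \<le> card I"
  shows "(\<Sum>i\<in>I. q ^ m + (real (k i) - real m) * (q ^ Suc m - q ^ m))
         = balanced_power_sum q (card I) l m"
proof -
  have "(\<Sum>i\<in>I. real (k i)) = real m * real (card I) + real l"
    using arg_cong[OF assms(2), of real] by (simp add: of_nat_sum)
  then have "(\<Sum>i\<in>I. real (k i) - real m) = real l"
    by (simp add: sum_subtractf)
  then have "(\<Sum>i\<in>I. q ^ m + (real (k i) - real m) * (q ^ Suc m - q ^ m))
             = real (card I) * q ^ m + real l * (q ^ Suc m - q ^ m)"
    by (simp add: sum.distrib flip: sum_distrib_right)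
  also have "\<dots> = balanced_power_sum q (card I) l m"
    using assms(3) by (simp add: balanced_power_sum_def of_nat_diff algebra_simps)
  finally show ?thesis .
qed

lemma sum_powers_ge_balanced:
  fixes q :: real
  assumes "1 < q" "finite I" "(\<Sum>i\<in>I. k i) = m * card I + l" "l \<le> card I"
  shows "balanced_power_sum q (card I) l m \<le> (\<Sum>i\<in>I. q ^ k i)"
proof -
  have "(\<Sum>i\<in>I. q ^ m + (real (k i) - real m) * (q ^ Suc m - q ^ m)) \<le> (\<Sum>i\<in>I. q ^ k i)"
    by (intro sum_mono power_secant_le[OF assms(1)])
  then show ?thesis
    using sum_power_secants[OF assms(2-4)] by simp
qed

lemma sum_powers_eq_balanced_iff:
  fixes q :: real
  assumes "1 < q" "finite I" "(\<Sum>i\<in>I. k i) = m * card I + l" "l \<le> card I"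
  shows "(\<Sum>i\<in>I. q ^ k i) = balanced_power_sum q (card I) l m \<longleftrightarrow> (\<forall>i\<in>I. k i = m \<or> k i = Suc m)"
proof
  assume sum_eq: "(\<Sum>i\<in>I. q ^ k i) = balanced_power_sum q (card I) l m"
  show "\<forall>i\<in>I. k i = m \<or> k i = Suc m"
  proof (rule ccontr)
    assume "\<not> (\<forall>i\<in>I. k i = m \<or> k i = Suc m)"
    then obtain j where "j \<in> I" "k j \<noteq> m" "k j \<noteq> Suc m"
      by blast
    then have "(\<Sum>i\<in>I. q ^ m + (real (k i) - real m) * (q ^ Suc m - q ^ m)) < (\<Sum>i\<in>I. q ^ k i)"
      using power_secant_le[OF assms(1)] power_secant_less[OF assms(1)]
      by (intro sum_strict_mono_ex1[OF assms(2)]) blast+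
    then show False
      using sum_eq sum_power_secants[OF assms(2-4)] by simp
  qed
next
  assume "\<forall>i\<in>I. k i = m \<or> k i = Suc m"
  then have "(\<Sum>i\<in>I. q ^ k i) = (\<Sum>i\<in>I. q ^ m + (real (k i) - real m) * (q ^ Suc m - q ^ m))"
    by (intro sum.cong) auto
  then show "(\<Sum>i\<in>I. q ^ k i) = balanced_power_sum q (card I) l m"
    using sum_power_secants[OF assms(2-4)] by simp
qed

lemma balanced_exponents_without_excess:
  fixes k :: "'a \<Rightarrow> nat"
  assumes "finite I" "(\<Sum>i\<in>I. k i) = m * card I" "\<forall>i\<in>I. k i = m \<or> k i = Suc m"
  shows "\<forall>i\<in>I. k i = m"
proof -
  have "(\<Sum>i\<in>I. k i - m) = (\<Sum>i\<in>I. k i) - (\<Sum>i\<in>I. m)"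
    by (rule sum_subtractf_nat) (use assms(3) in auto)
  also have "\<dots> = 0"
    by (simp add: assms(2) mult.commute)
  finally have "\<forall>i\<in>I. k i \<le> m"
    using assms(1) by simp
  then show ?thesis
    using assms(3) by fastforce
qed

lemma face_of_convex_hull_supporting_hyperplane:
  fixes G :: "'a::euclidean_space set"
  assumes "finite G" "\<forall>g\<in>G. b \<le> a \<bullet> g"
  shows "convex hull {g\<in>G. a \<bullet> g = b} face_of convex hull G"
proof -
  have "convex hull G \<subseteq> {x. b \<le> a \<bullet> x}"
    using assms(2) by (intro hull_minimal) (auto simp: convex_halfspace_ge)
  then have face: "convex hull G \<inter> {x. a \<bullet> x = b} face_of convex hull G"
    by (intro face_of_Int_supporting_hyperplane_ge) auto
  then obtain G' where "G' \<subseteq> G" "convex hull G \<inter> {x. a \<bullet> x = b} = convex hull G'"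
    using face_of_convex_hull_subset[OF finite_imp_compact[OF assms(1)]] by blast
  moreover have "G' \<subseteq> {x. a \<bullet> x = b}"
    using calculation hull_subset[of G' convex] by blast
  ultimately have "convex hull G \<inter> {x. a \<bullet> x = b} \<subseteq> convex hull {g\<in>G. a \<bullet> g = b}"
    by (metis (no_types, lifting) hull_mono mem_Collect_eq subset_iff)
  moreover have "convex hull {g\<in>G. a \<bullet> g = b} \<subseteq> convex hull G \<inter> {x. a \<bullet> x = b}"
    by (intro Int_greatest hull_mono hull_minimal) (auto simp: convex_hyperplane)
  ultimately show ?thesis
    using face by (simp add: subset_antisym)
qed

lemma facet_of_hyperplane_face:
  fixes F P :: "'a::euclidean_space set"
  assumes "F face_of P" "F \<noteq> {}" "F \<subseteq> {x. a \<bullet> x = b}"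
    and "x \<in> P" "a \<bullet> x \<noteq> b" "aff_dim F = int DIM('a) - 1"
  shows "F facet_of P"
proof -
  have "affine hull F \<subseteq> {x. a \<bullet> x = b}"
    using assms(3) by (intro hull_minimal) (auto simp: affine_hyperplane)
  then have "x \<notin> affine hull F"
    using assms(5) by blast
  moreover have "affine hull F \<subseteq> affine hull P"
    using face_of_imp_subset[OF assms(1)] by (rule hull_mono)
  ultimately have "affine hull F \<subset> affine hull P"
    using hull_inc[OF assms(4)] by blast
  then have "aff_dim F < aff_dim P"
    by (rule aff_dim_psubset)
  then have "aff_dim P = aff_dim F + 1"
    using aff_dim_le_DIM[of P] assms(6) by linarith
  then show ?thesis
    using assms(1,2) by (simp add: facet_of_def)
qed

lemma finite_vec_factorisations:
  assumes "N \<noteq> 0"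
  shows "finite (vec_factorisations N :: (real^'n) set)"
proof -
  have "vec_factorisations N \<subseteq> (\<lambda>f. \<chi> i. real (f i)) ` PiE (UNIV :: 'n set) (\<lambda>_. {..N})"
  proof
    fix x :: "real^'n"
    assume "x \<in> vec_factorisations N"
    then obtain v :: "nat^'n" where v: "(\<Prod>i\<in>UNIV. v$i) = N" "x = (\<chi> i. real (v$i))"
      unfolding vec_factorisations_def by blast
    have "v$i \<le> N" for i
      using assms v(1) by (metis dvd_imp_le dvd_prodI finite UNIV_I not_gr0)
    then have "(\<lambda>i. v$i) \<in> PiE UNIV (\<lambda>_. {..N})"
      by (simp add: PiE_UNIV_domain)
    then show "x \<in> (\<lambda>f. \<chi> i. real (f i)) ` PiE UNIV (\<lambda>_. {..N})"
      using v(2) by blast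
  qed
  then show ?thesis
    by (rule finite_subset) (intro finite_imageI finite_PiE; simp)
qed

lemma vec_factorisations_prime_power:
  fixes p e :: nat
  assumes "prime p"
  shows "vec_factorisations (p ^ e)
         = {\<chi> i. real p ^ (a$i) | a :: nat^'n. (\<Sum>i\<in>UNIV. a$i) = e}"
proof (intro set_eqI iffI)
  fix x :: "real^'n"
  assume "x \<in> vec_factorisations (p ^ e)"
  then obtain v :: "nat^'n" where v: "(\<Prod>i\<in>UNIV. v$i) = p ^ e" "x = (\<chi> i. real (v$i))"
    unfolding vec_factorisations_def by blast
  have "\<exists>k. v$i = p ^ k" for i
    using v(1) divides_primepow_nat[OF assms] by (metis dvd_prodI finite UNIV_I)
  then obtain a :: "nat^'n" where a: "v$i = p ^ (a$i)" for i
    by (metis vec_lambda_beta)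
  have "p ^ (\<Sum>i\<in>UNIV. a$i) = p ^ e"
    using v(1) by (simp add: a power_sum)
  then have "(\<Sum>i\<in>UNIV. a$i) = e"
    using assms prime_gt_1_nat power_inject_exp by blast
  moreover have "x = (\<chi> i. real p ^ (a$i))"
    using v(2) by (simp add: a)
  ultimately show "x \<in> {\<chi> i. real p ^ (a$i) | a :: nat^'n. (\<Sum>i\<in>UNIV. a$i) = e}"
    by blast
next
  fix x :: "real^'n"
  assume "x \<in> {\<chi> i. real p ^ (a$i) | a :: nat^'n. (\<Sum>i\<in>UNIV. a$i) = e}"
  then obtain a :: "nat^'n" where a: "(\<Sum>i\<in>UNIV. a$i) = e" "x = (\<chi> i. real p ^ (a$i))"
    by blast
  have "(\<Prod>i\<in>UNIV. (\<chi> i. p ^ (a$i))$i) = p ^ e"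
    using a(1) by (simp flip: power_sum)
  moreover have "x = (\<chi> i. real ((\<chi> i. p ^ (a$i))$i))"
    using a(2) by simp
  ultimately show "x \<in> vec_factorisations (p ^ e)"
    unfolding vec_factorisations_def by blast
qed

lemma vec_factorisation_weighted_sum_ge:
  fixes \<alpha> :: "nat^'n"
  assumes "prime p" "e + (\<Sum>i\<in>UNIV. \<alpha>$i) = m * CARD('n) + l" "l \<le> CARD('n)"
    and "x \<in> vec_factorisations (p ^ e)"
  shows "balanced_power_sum (real p) CARD('n) l m \<le> (\<chi> i. real p ^ (\<alpha>$i)) \<bullet> x"
proof -
  obtain a :: "nat^'n" where a: "(\<Sum>i\<in>UNIV. a$i) = e" "x = (\<chi> i. real p ^ (a$i))"
    using assms(4) vec_factorisations_prime_power[OF assms(1)] by blast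
  have "(\<Sum>i\<in>UNIV. \<alpha>$i + a$i) = m * card (UNIV :: 'n set) + l"
    using a(1) assms(2) by (simp add: sum.distrib)
  then show ?thesis
    using sum_powers_ge_balanced[of "real p" UNIV "\<lambda>i. \<alpha>$i + a$i"] assms(1,3) prime_gt_1_nat
    by (simp add: a(2) power_add inner_vec_def)
qed

lemma vec_factorisation_weighted_sum_eq_iff:
  fixes \<alpha> a :: "nat^'n"
  assumes "prime p" "e + (\<Sum>i\<in>UNIV. \<alpha>$i) = m * CARD('n) + l" "l \<le> CARD('n)"
    and "(\<Sum>i\<in>UNIV. a$i) = e"
  shows "(\<chi> i. real p ^ (\<alpha>$i)) \<bullet> (\<chi> i. real p ^ (a$i)) = balanced_power_sum (real p) CARD('n) l m
         \<longleftrightarrow> (\<forall>i. \<alpha>$i + a$i = m \<or> \<alpha>$i + a$i = Suc m)"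
proof -
  have "(\<Sum>i\<in>UNIV. \<alpha>$i + a$i) = m * card (UNIV :: 'n set) + l"
    using assms(2,4) by (simp add: sum.distrib)
  then show ?thesis
    using sum_powers_eq_balanced_iff[of "real p" UNIV "\<lambda>i. \<alpha>$i + a$i"] assms(1,3) prime_gt_1_nat
    by (simp add: power_add inner_vec_def)
qed

lemma balanced_vec_factorisations:
  fixes \<alpha> :: "nat^'n"
  assumes "prime p" "e + (\<Sum>i\<in>UNIV. \<alpha>$i) = m * CARD('n) + l" "l \<le> CARD('n)"
  shows "{x \<in> vec_factorisations (p ^ e).
            (\<chi> i. real p ^ (\<alpha>$i)) \<bullet> x = balanced_power_sum (real p) CARD('n) l m}
         = (\<lambda>a. \<chi> i. real p ^ (a$i))
             ` {a. (\<Sum>i\<in>UNIV. a$i) = e \<and> (\<forall>i. \<alpha>$i + a$i = m \<or> \<alpha>$i + a$i = Suc m)}"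
  unfolding vec_factorisations_prime_power[OF assms(1)]
  using vec_factorisation_weighted_sum_eq_iff[OF assms] by blast

lemma factorisation_polytope_weighted_sum:
  fixes \<alpha> :: "nat^'n"
  assumes "prime p" "e + (\<Sum>i\<in>UNIV. \<alpha>$i) = m * CARD('n) + l" "l \<le> CARD('n)"
  defines "w \<equiv> \<chi> i. real p ^ (\<alpha>$i)" and "C \<equiv> balanced_power_sum (real p) CARD('n) l m"
  shows "\<forall>x \<in> factorisation_polytope (p ^ e). C \<le> w \<bullet> x"
    and "convex hull {x \<in> vec_factorisations (p ^ e). w \<bullet> x = C} face_of factorisation_polytope (p ^ e)"
proof -
  have ge: "\<forall>x \<in> vec_factorisations (p ^ e). C \<le> w \<bullet> x"
    using vec_factorisation_weighted_sum_ge[OF assms(1-3)] by (simp add: w_def C_def)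
  then have "factorisation_polytope (p ^ e) \<subseteq> {x. C \<le> w \<bullet> x}"
    unfolding factorisation_polytope_def by (intro hull_minimal) (auto simp: convex_halfspace_ge)
  then show "\<forall>x \<in> factorisation_polytope (p ^ e). C \<le> w \<bullet> x"
    by blast
  have "finite (vec_factorisations (p ^ e) :: (real^'n) set)"
    using assms(1) by (intro finite_vec_factorisations) (simp add: prime_gt_0_nat)
  then show "convex hull {x \<in> vec_factorisations (p ^ e). w \<bullet> x = C} face_of factorisation_polytope (p ^ e)"
    unfolding factorisation_polytope_def using ge by (rule face_of_convex_hull_supporting_hyperplane)
qed

lemma vec_factorisation_extreme_point:
  fixes x :: "real^'n"
  assumes "prime p" "x \<in> vec_factorisations (p ^ e)"
  shows "x extreme_point_of factorisation_polytope (p ^ e)"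
proof -
  obtain a0 :: "nat^'n" where a0: "(\<Sum>i\<in>UNIV. a0$i) = e" "x = (\<chi> i. real p ^ (a0$i))"
    using assms vec_factorisations_prime_power[OF assms(1)] by blast
  have a0_le: "a0$i \<le> e" for i
    using a0(1) by (metis member_le_sum finite UNIV_I zero_le)
  \<comment> \<open>The weights p^(e - a0_i) single out x as the only balanced factorisation (m = e, l = 0).\<close>
  define \<alpha> :: "nat^'n" where "\<alpha> = (\<chi> i. e - a0$i)"
  have "(\<Sum>i\<in>UNIV. \<alpha>$i) = CARD('n) * e - e"
    using a0_le by (simp add: \<alpha>_def sum_subtractf_nat a0(1))
  moreover have "e \<le> CARD('n) * e"
    by simp
  ultimately have sum_\<alpha>: "e + (\<Sum>i\<in>UNIV. \<alpha>$i) = e * CARD('n) + 0"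
    by simp
  have "{a. (\<Sum>i\<in>UNIV. a$i) = e \<and> (\<forall>i. \<alpha>$i + a$i = e \<or> \<alpha>$i + a$i = Suc e)} = {a0}"
  proof (intro set_eqI iffI)
    fix a :: "nat^'n"
    assume "a \<in> {a. (\<Sum>i\<in>UNIV. a$i) = e \<and> (\<forall>i. \<alpha>$i + a$i = e \<or> \<alpha>$i + a$i = Suc e)}"
    then have a: "(\<Sum>i\<in>UNIV. a$i) = e" "\<forall>i. \<alpha>$i + a$i = e \<or> \<alpha>$i + a$i = Suc e"
      by auto
    have "(\<Sum>i\<in>UNIV. \<alpha>$i + a$i) = e * card (UNIV :: 'n set)"
      using sum_\<alpha> a(1) by (simp add: sum.distrib)
    then have exponents: "\<forall>i. \<alpha>$i + a$i = e"
      using balanced_exponents_without_excess[OF finite, where k = "\<lambda>i. \<alpha>$i + a$i" and m = e] a(2)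
      by blast
    have "a$i = a0$i" for i
      using exponents[rule_format, of i] a0_le[of i] unfolding \<alpha>_def by simp
    then show "a \<in> {a0}"
      by (simp add: vec_eq_iff)
  next
    fix a
    assume "a \<in> {a0}"
    then show "a \<in> {a. (\<Sum>i\<in>UNIV. a$i) = e \<and> (\<forall>i. \<alpha>$i + a$i = e \<or> \<alpha>$i + a$i = Suc e)}"
      using a0_le a0(1) by (simp add: \<alpha>_def)
  qed
  then have "{y \<in> vec_factorisations (p ^ e).
               (\<chi> i. real p ^ (\<alpha>$i)) \<bullet> y = balanced_power_sum (real p) CARD('n) 0 e} = {x}"
    unfolding balanced_vec_factorisations[OF assms(1) sum_\<alpha> zero_le] a0(2) by simp
  then have "{x} face_of factorisation_polytope (p ^ e)"
    using factorisation_polytope_weighted_sum(2)[OF assms(1) sum_\<alpha> zero_le] by simp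
  then show ?thesis
    by (simp add: face_of_singleton)
qed

definition hypersimplex_vertices :: "nat \<Rightarrow> (real^'n) set" where
  "hypersimplex_vertices l = {x. (\<forall>i. x$i \<in> {0,1}) \<and> (\<Sum>i\<in>UNIV. x$i) = real l}"

lemma hypersimplex_eq_convex_hull_vertices:
  "hypersimplex l = convex hull (hypersimplex_vertices l)"
  by (simp add: hypersimplex_def hypersimplex_vertices_def)

lemma indicator_vec_in_hypersimplex_vertices:
  fixes T :: "'n::finite set"
  assumes "card T = l"
  shows "(\<chi> i. if i \<in> T then 1 else 0) \<in> hypersimplex_vertices l"
  using assms by (simp add: hypersimplex_vertices_def sum.If_cases)

lemma hypersimplex_vertices_eq_image_nat:
  "hypersimplex_vertices l
   = (\<lambda>\<epsilon>. \<chi> i. real (\<epsilon>$i)) ` {\<epsilon> :: nat^'n. (\<forall>i. \<epsilon>$i \<in> {0,1}) \<and> (\<Sum>i\<in>UNIV. \<epsilon>$i) = l}"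
proof (intro set_eqI iffI)
  fix x :: "real^'n"
  assume x: "x \<in> hypersimplex_vertices l"
  define \<epsilon> :: "nat^'n" where "\<epsilon> = (\<chi> i. if x$i = 1 then 1 else 0)"
  have "x$i \<in> {0,1}" for i
    using x by (simp add: hypersimplex_vertices_def)
  then have x_eq: "x = (\<chi> i. real (\<epsilon>$i))"
    by (auto simp: \<epsilon>_def vec_eq_iff)
  have "real (\<Sum>i\<in>UNIV. \<epsilon>$i) = (\<Sum>i\<in>UNIV. x$i)"
    by (simp add: x_eq)
  moreover have "(\<Sum>i\<in>UNIV. x$i) = real l"
    using x by (simp add: hypersimplex_vertices_def)
  ultimately have "(\<Sum>i\<in>UNIV. \<epsilon>$i) = l"
    by (metis of_nat_eq_iff)
  moreover have "\<forall>i. \<epsilon>$i \<in> {0,1}"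
    by (simp add: \<epsilon>_def)
  ultimately show "x \<in> (\<lambda>\<epsilon>. \<chi> i. real (\<epsilon>$i)) ` {\<epsilon>. (\<forall>i. \<epsilon>$i \<in> {0,1}) \<and> (\<Sum>i\<in>UNIV. \<epsilon>$i) = l}"
    using x_eq by blast
next
  fix x :: "real^'n"
  assume "x \<in> (\<lambda>\<epsilon>. \<chi> i. real (\<epsilon>$i)) ` {\<epsilon>. (\<forall>i. \<epsilon>$i \<in> {0,1}) \<and> (\<Sum>i\<in>UNIV. \<epsilon>$i) = l}"
  then obtain \<epsilon> :: "nat^'n" where \<epsilon>: "\<forall>i. \<epsilon>$i \<in> {0,1}" "(\<Sum>i\<in>UNIV. \<epsilon>$i) = l"
    and x_eq: "x = (\<chi> i. real (\<epsilon>$i))"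
    by blast
  have "(\<Sum>i\<in>UNIV. x$i) = real (\<Sum>i\<in>UNIV. \<epsilon>$i)"
    by (simp add: x_eq)
  moreover have "x$i \<in> {0,1}" for i
    using \<epsilon>(1)[rule_format, of i] by (auto simp: x_eq)
  ultimately show "x \<in> hypersimplex_vertices l"
    using \<epsilon>(2) by (simp add: hypersimplex_vertices_def)
qed

lemma axis_diff_eq_hypersimplex_vertex_diff:
  fixes i j :: "'n::finite"
  assumes "1 \<le> l" "l < CARD('n)" "i \<noteq> j"
  shows "\<exists>x\<in>hypersimplex_vertices l. \<exists>y\<in>hypersimplex_vertices l. axis i 1 - axis j 1 = x - y"
proof -
  have "l - 1 \<le> card (UNIV - {i, j})"
    using assms by (simp add: card_Diff_subset)
  then obtain T where T: "T \<subseteq> UNIV - {i, j}" "card T = l - 1" "finite T"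
    by (rule obtain_subset_with_card_n)
  then have "i \<notin> T" "j \<notin> T"
    by auto
  then have "card (insert i T) = l" "card (insert j T) = l"
    using T(2,3) assms(1) by simp_all
  moreover have "axis i 1 - axis j 1
      = (\<chi> k. if k \<in> insert i T then 1 else 0) - (\<chi> k. if k \<in> insert j T then (1::real) else 0)"
    using \<open>i \<notin> T\<close> \<open>j \<notin> T\<close> assms(3) by (simp add: vec_eq_iff axis_def)
  ultimately show ?thesis
    using indicator_vec_in_hypersimplex_vertices by blast
qed

lemma sum_zero_in_span_axis_diffs:
  fixes w :: "real^'n"
  assumes "(\<Sum>i\<in>UNIV. w$i) = 0"
  shows "w \<in> span (range (\<lambda>i. axis i 1 - axis j 1))"
proof -
  have "(\<Sum>i\<in>UNIV. w$i *\<^sub>R (axis i 1 - axis j 1))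
        = (\<Sum>i\<in>UNIV. w$i *s axis i 1) - (\<Sum>i\<in>UNIV. w$i) *\<^sub>R axis j 1"
    by (simp add: scaleR_right_diff_distrib sum_subtractf scaleR_sum_left scalar_mult_eq_scaleR)
  then have "w = (\<Sum>i\<in>UNIV. w$i *\<^sub>R (axis i 1 - axis j 1))"
    using assms by (simp add: basis_expansion)
  also have "\<dots> \<in> span (range (\<lambda>i. axis i 1 - axis j 1))"
    by (intro span_sum span_mul span_base) auto
  finally show ?thesis .
qed

lemma hyperplane_subset_affine_hull_hypersimplex_vertices:
  assumes "1 \<le> l" "l < CARD('n)"
  shows "{x :: real^'n. (\<Sum>i\<in>UNIV. x$i) = real l} \<subseteq> affine hull (hypersimplex_vertices l)"
proof
  fix z :: "real^'n"
  assume z: "z \<in> {x. (\<Sum>i\<in>UNIV. x$i) = real l}"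
  define V where "V = (hypersimplex_vertices l :: (real^'n) set)"
  obtain T :: "'n set" where "card T = l"
    using assms(2) obtain_subset_with_card_n[of l UNIV] by (metis less_imp_le)
  define v0 :: "real^'n" where "v0 = (\<chi> i. if i \<in> T then 1 else 0)"
  have v0: "v0 \<in> V"
    using indicator_vec_in_hypersimplex_vertices[OF \<open>card T = l\<close>] by (simp add: V_def v0_def)
  define D where "D = span {x - v0 | x. x \<in> V - {v0}}"
  have diff_in_D: "x - v0 \<in> D" if "x \<in> V" for x
    using that by (cases "x = v0") (auto simp: D_def span_zero intro: span_base)
  fix j :: 'n
  have "axis i 1 - axis j 1 \<in> D" for i
  proof (cases "i = j")
    case True
    then show ?thesis
      by (simp add: D_def span_zero)
  next
    case False
    then obtain x y where xy: "x \<in> V" "y \<in> V" "axis i 1 - axis j 1 = x - y"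
      using axis_diff_eq_hypersimplex_vertex_diff[OF assms] unfolding V_def by blast
    have "(x - v0) - (y - v0) \<in> D"
      unfolding D_def by (rule span_diff) (use diff_in_D xy in \<open>simp_all add: D_def\<close>)
    then show ?thesis
      using xy(3) by simp
  qed
  then have "span (range (\<lambda>i. axis i 1 - axis j 1)) \<subseteq> D"
    unfolding D_def by (intro span_minimal[OF _ subspace_span]) blast
  moreover have "(\<Sum>i\<in>UNIV. (z - v0)$i) = 0"
    using z v0 by (simp add: V_def hypersimplex_vertices_def sum_subtractf)
  ultimately have "z - v0 \<in> D"
    using sum_zero_in_span_axis_diffs by blast
  then show "z \<in> affine hull (hypersimplex_vertices l)"
    unfolding V_def[symmetric] affine_hull_span[OF v0] D_def by (intro CollectI exI[of _ "z - v0"]) simp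
qed

lemma aff_dim_hypersimplex_vertices:
  assumes "1 \<le> l" "l < CARD('n)"
  shows "aff_dim (hypersimplex_vertices l :: (real^'n) set) = int CARD('n) - 1"
proof -
  define H where "H = {x :: real^'n. (\<chi> i. 1) \<bullet> x = real l}"
  have H_eq: "H = {x. (\<Sum>i\<in>UNIV. x$i) = real l}"
    by (simp add: H_def inner_vec_def)
  have "aff_dim H \<le> aff_dim (hypersimplex_vertices l :: (real^'n) set)"
    using aff_dim_subset[OF hyperplane_subset_affine_hull_hypersimplex_vertices[OF assms]]
    by (simp add: H_eq)
  moreover have "aff_dim (hypersimplex_vertices l :: (real^'n) set) \<le> aff_dim H"
    by (rule aff_dim_subset) (auto simp: H_eq hypersimplex_vertices_def)
  moreover have "aff_dim H = int CARD('n) - 1"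
    unfolding H_def by (subst aff_dim_hyperplane) (auto simp: vec_eq_iff)
  ultimately show ?thesis
    by simp
qed

lemma diagonal_affine_image:
  fixes c b :: "'n::finite \<Rightarrow> real"
  assumes "\<forall>i. c i \<noteq> 0"
  shows "affinely_equivalent (convex hull A) (convex hull ((\<lambda>x. \<chi> i. c i * x$i + b i) ` A))"
    and "aff_dim ((\<lambda>x. \<chi> i. c i * x$i + b i) ` A) = aff_dim A"
proof -
  define L :: "real^'n \<Rightarrow> real^'n" where "L x = (\<chi> i. c i * x$i)" for x
  have "linear L"
    by (intro linearI) (simp_all add: L_def vec_eq_iff algebra_simps)
  moreover have "inj L"
    by (rule injI) (use assms in \<open>simp add: L_def vec_eq_iff\<close>)
  moreover have "surj L"
    by (rule surjI[of _ "\<lambda>y. \<chi> i. y$i / c i"]) (use assms in \<open>simp add: L_def vec_eq_iff\<close>)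
  have affine_eq: "(\<lambda>x. \<chi> i. c i * x$i + b i) = (\<lambda>x. L x + (\<chi> i. b i))"
    by (simp add: fun_eq_iff L_def vec_eq_iff)
  have image_eq: "(\<lambda>x. \<chi> i. c i * x$i + b i) ` S = (\<lambda>x. (\<chi> i. b i) + x) ` (L ` S)" for S
    unfolding affine_eq image_image by (simp add: add.commute)
  have "(\<lambda>x. (\<chi> i. b i) + x) ` (L ` (convex hull A)) = convex hull ((\<lambda>x. \<chi> i. c i * x$i + b i) ` A)"
    unfolding image_eq convex_hull_translation convex_hull_linear_image[OF \<open>linear L\<close>] ..
  then have "(\<lambda>x. L x + (\<chi> i. b i)) ` (convex hull A) = convex hull ((\<lambda>x. \<chi> i. c i * x$i + b i) ` A)"
    by (simp add: image_image add.commute)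
  then show "affinely_equivalent (convex hull A) (convex hull ((\<lambda>x. \<chi> i. c i * x$i + b i) ` A))"
    unfolding affinely_equivalent_def bij_def
    using \<open>linear L\<close> \<open>inj L\<close> \<open>surj L\<close> by (intro exI[of _ L] exI[of _ "\<chi> i. b i"] conjI)
  show "aff_dim ((\<lambda>x. \<chi> i. c i * x$i + b i) ` A) = aff_dim A"
    unfolding image_eq aff_dim_translation_eq using \<open>linear L\<close> \<open>inj L\<close>
    by (rule aff_dim_injective_linear_image)
qed

lemma R_set_decomposition:
  fixes \<alpha> :: "nat^'n"
  assumes "\<alpha> \<in> R_set l e" "l < CARD('n)"
  obtains m where "e + (\<Sum>i\<in>UNIV. \<alpha>$i) = m * CARD('n) + l" "mu_of l e \<alpha> = int m" "\<forall>i. \<alpha>$i \<le> m"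
proof -
  define d where "d = CARD('n)"
  define s where "s = (\<Sum>i\<in>UNIV. \<alpha>$i)"
  have max_bound: "Max (range (\<lambda>i. \<alpha>$i)) * d < e + s" and "[e + s = l] (mod d)"
    using assms(1) by (auto simp: R_set_def d_def s_def)
  then have "(e + s) mod d = l"
    using assms(2) by (simp add: cong_def d_def)
  then have decomposition: "e + s = (e + s) div d * d + l"
    by (metis div_mult_mod_eq)
  define m where "m = (e + s) div d"
  have "int e + (\<Sum>i\<in>UNIV. int (\<alpha>$i)) - int l = int m * int d"
    using arg_cong[OF decomposition, of int] by (simp add: m_def s_def)
  then have mu: "mu_of l e \<alpha> = int m"
    by (simp add: mu_of_def d_def)
  have "\<alpha>$i \<le> m" for i
  proof -
    have "\<alpha>$i * d \<le> Max (range (\<lambda>i. \<alpha>$i)) * d"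
      by (intro mult_right_mono Max_ge) auto
    then have "\<alpha>$i * d < m * d + d"
      using max_bound decomposition assms(2) unfolding m_def d_def by linarith
    then have "\<alpha>$i * d < Suc m * d"
      by (simp add: add.commute)
    then have "\<alpha>$i < Suc m"
      using mult_less_cancel2 by blast
    then show ?thesis
      by simp
  qed
  then show ?thesis
    using that[of m] mu decomposition by (simp add: m_def d_def s_def)
qed

lemma S_alpha_eq_image:
  fixes \<alpha> :: "nat^'n"
  assumes "mu_of l e \<alpha> = int m" "\<forall>i. \<alpha>$i \<le> m"
  shows "S_alpha p l e \<alpha>
         = (\<lambda>\<epsilon>. \<chi> i. real p ^ (m - \<alpha>$i + \<epsilon>$i)) ` {\<epsilon>. (\<forall>i. \<epsilon>$i \<in> {0,1}) \<and> (\<Sum>i\<in>UNIV. \<epsilon>$i) = l}"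
proof -
  have "(\<chi> i. real p powi (mu_of l e \<alpha> - int (\<alpha>$i) + int (\<epsilon>$i))) = (\<chi> i. real p ^ (m - \<alpha>$i + \<epsilon>$i))"
    for \<epsilon> :: "nat^'n"
  proof -
    have "mu_of l e \<alpha> - int (\<alpha>$i) + int (\<epsilon>$i) = int (m - \<alpha>$i + \<epsilon>$i)" for i
      by (simp only: assms(1) of_nat_add of_nat_diff[OF assms(2)[rule_format]])
    then show ?thesis
      by (simp only: power_int_of_nat)
  qed
  then show ?thesis
    unfolding S_alpha_def by (auto simp: image_def)
qed

lemma S_alpha_eq_diagonal_image:
  fixes \<alpha> :: "nat^'n"
  assumes "mu_of l e \<alpha> = int m" "\<forall>i. \<alpha>$i \<le> m"
  shows "S_alpha p l e \<alpha>
         = (\<lambda>x. \<chi> i. (real p ^ (m - \<alpha>$i) * (real p - 1)) * x$i + real p ^ (m - \<alpha>$i))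
             ` hypersimplex_vertices l"
proof -
  have pointwise: "(\<chi> i. (real p ^ (m - \<alpha>$i) * (real p - 1)) * real (\<epsilon>$i) + real p ^ (m - \<alpha>$i))
        = (\<chi> i. real p ^ (m - \<alpha>$i + \<epsilon>$i))"
    if "\<forall>i. \<epsilon>$i \<in> {0,1}" for \<epsilon> :: "nat^'n"
  proof -
    have "real p ^ (m - \<alpha>$i) * (real p - 1) * real (\<epsilon>$i) + real p ^ (m - \<alpha>$i)
          = real p ^ (m - \<alpha>$i + \<epsilon>$i)" for i
      using that[rule_format, of i] by (auto simp: algebra_simps)
    then show ?thesis
      by (simp add: vec_eq_iff)
  qed
  show ?thesis
    unfolding S_alpha_eq_image[OF assms] hypersimplex_vertices_eq_image_nat image_image
    by (rule image_cong[OF refl]) (simp add: pointwise)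
qed

lemma sum_add_eq_shifted_sum:
  fixes f g h :: "'a \<Rightarrow> nat"
  assumes "\<forall>i\<in>I. f i + g i = m + h i"
  shows "(\<Sum>i\<in>I. f i) + (\<Sum>i\<in>I. g i) = m * card I + (\<Sum>i\<in>I. h i)"
proof -
  have "(\<Sum>i\<in>I. f i) + (\<Sum>i\<in>I. g i) = (\<Sum>i\<in>I. f i + g i)"
    by (rule sum.distrib[symmetric])
  also have "\<dots> = (\<Sum>i\<in>I. m + h i)"
    using assms by simp
  also have "\<dots> = m * card I + (\<Sum>i\<in>I. h i)"
    by (simp add: sum.distrib mult.commute)
  finally show ?thesis .
qed

lemma balanced_exponent_vectors:
  fixes \<alpha> a :: "nat^'n"
  assumes "e + (\<Sum>i\<in>UNIV. \<alpha>$i) = m * CARD('n) + l" "\<forall>i. \<alpha>$i \<le> m"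
  shows "(\<Sum>i\<in>UNIV. a$i) = e \<and> (\<forall>i. \<alpha>$i + a$i = m \<or> \<alpha>$i + a$i = Suc m)
         \<longleftrightarrow> (\<exists>\<epsilon>. (\<forall>i. \<epsilon>$i \<in> {0,1}) \<and> (\<Sum>i\<in>UNIV. \<epsilon>$i) = l \<and> a = (\<chi> i. m - \<alpha>$i + \<epsilon>$i))"
proof
  assume "(\<Sum>i\<in>UNIV. a$i) = e \<and> (\<forall>i. \<alpha>$i + a$i = m \<or> \<alpha>$i + a$i = Suc m)"
  then have sum_a: "(\<Sum>i\<in>UNIV. a$i) = e" and balanced: "\<forall>i. \<alpha>$i + a$i = m \<or> \<alpha>$i + a$i = Suc m"
    by auto
  define \<epsilon> :: "nat^'n" where "\<epsilon> = (\<chi> i. \<alpha>$i + a$i - m)"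
  have "\<alpha>$i + a$i = m + \<epsilon>$i" and a_eq: "a$i = m - \<alpha>$i + \<epsilon>$i" for i
    using balanced[rule_format, of i] assms(2)[rule_format, of i] by (auto simp: \<epsilon>_def)
  then have "e + (\<Sum>i\<in>UNIV. \<alpha>$i) = m * CARD('n) + (\<Sum>i\<in>UNIV. \<epsilon>$i)"
    using sum_add_eq_shifted_sum[of UNIV "\<lambda>i. \<alpha>$i" "\<lambda>i. a$i" m "\<lambda>i. \<epsilon>$i"] sum_a by simp
  moreover have "\<forall>i. \<epsilon>$i \<in> {0,1}"
    using balanced by (auto simp: \<epsilon>_def)
  moreover have "a = (\<chi> i. m - \<alpha>$i + \<epsilon>$i)"
    by (simp add: vec_eq_iff a_eq)
  ultimately show "\<exists>\<epsilon>. (\<forall>i. \<epsilon>$i \<in> {0,1}) \<and> (\<Sum>i\<in>UNIV. \<epsilon>$i) = l \<and> a = (\<chi> i. m - \<alpha>$i + \<epsilon>$i)"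
    using assms(1) by auto
next
  assume "\<exists>\<epsilon>. (\<forall>i. \<epsilon>$i \<in> {0,1}) \<and> (\<Sum>i\<in>UNIV. \<epsilon>$i) = l \<and> a = (\<chi> i. m - \<alpha>$i + \<epsilon>$i)"
  then obtain \<epsilon> :: "nat^'n" where \<epsilon>: "\<forall>i. \<epsilon>$i \<in> {0,1}" "(\<Sum>i\<in>UNIV. \<epsilon>$i) = l"
    and a: "a = (\<chi> i. m - \<alpha>$i + \<epsilon>$i)"
    by blast
  have exponents: "\<alpha>$i + a$i = m + \<epsilon>$i" for i
    using assms(2)[rule_format, of i] by (simp add: a)
  then have "(\<Sum>i\<in>UNIV. \<alpha>$i) + (\<Sum>i\<in>UNIV. a$i) = m * CARD('n) + l"
    using sum_add_eq_shifted_sum[of UNIV "\<lambda>i. \<alpha>$i" "\<lambda>i. a$i" m "\<lambda>i. \<epsilon>$i"] \<epsilon>(2) by simp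
  then have "(\<Sum>i\<in>UNIV. a$i) = e"
    using assms(1) by linarith
  moreover have "\<forall>i. \<alpha>$i + a$i = m \<or> \<alpha>$i + a$i = Suc m"
    using \<epsilon>(1) exponents by auto
  ultimately show "(\<Sum>i\<in>UNIV. a$i) = e \<and> (\<forall>i. \<alpha>$i + a$i = m \<or> \<alpha>$i + a$i = Suc m)"
    by blast
qed

lemma S_alpha_eq_balanced_factorisations:
  fixes \<alpha> :: "nat^'n"
  assumes "prime p" "e + (\<Sum>i\<in>UNIV. \<alpha>$i) = m * CARD('n) + l" "l \<le> CARD('n)"
    and "mu_of l e \<alpha> = int m" "\<forall>i. \<alpha>$i \<le> m"
  shows "S_alpha p l e \<alpha> = {x \<in> vec_factorisations (p ^ e).
           (\<chi> i. real p ^ (\<alpha>$i)) \<bullet> x = balanced_power_sum (real p) CARD('n) l m}"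
proof -
  have "{a. (\<Sum>i\<in>UNIV. a$i) = e \<and> (\<forall>i. \<alpha>$i + a$i = m \<or> \<alpha>$i + a$i = Suc m)}
        = (\<lambda>\<epsilon>. \<chi> i. m - \<alpha>$i + \<epsilon>$i) ` {\<epsilon>. (\<forall>i. \<epsilon>$i \<in> {0,1}) \<and> (\<Sum>i\<in>UNIV. \<epsilon>$i) = l}"
    using balanced_exponent_vectors[OF assms(2,5)] by blast
  then show ?thesis
    unfolding balanced_vec_factorisations[OF assms(1-3)] S_alpha_eq_image[OF assms(4,5)]
    by (simp add: image_image)
qed

lemma aff_dim_S_alpha:
  fixes \<alpha> :: "nat^'n"
  assumes "1 < p" "1 \<le> l" "l < CARD('n)" "mu_of l e \<alpha> = int m" "\<forall>i. \<alpha>$i \<le> m"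
  shows "aff_dim (S_alpha p l e \<alpha>) = int CARD('n) - 1"
proof -
  have "\<forall>i. real p ^ (m - \<alpha>$i) * (real p - 1) \<noteq> 0"
    using assms(1) by simp
  from diagonal_affine_image(2)[OF this, where b = "\<lambda>i. real p ^ (m - \<alpha>$i)" and A = "hypersimplex_vertices l"]
  show ?thesis
    unfolding S_alpha_eq_diagonal_image[OF assms(4,5)] aff_dim_hypersimplex_vertices[OF assms(2,3)] .
qed

lemma affinely_equivalent_hypersimplex_S_alpha:
  fixes \<alpha> :: "nat^'n"
  assumes "1 < p" "mu_of l e \<alpha> = int m" "\<forall>i. \<alpha>$i \<le> m"
  shows "affinely_equivalent (hypersimplex l) (convex hull (S_alpha p l e \<alpha>))"
proof -
  have "\<forall>i. real p ^ (m - \<alpha>$i) * (real p - 1) \<noteq> 0"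
    using assms(1) by simp
  from diagonal_affine_image(1)[OF this, where b = "\<lambda>i. real p ^ (m - \<alpha>$i)" and A = "hypersimplex_vertices l"]
  show ?thesis
    unfolding hypersimplex_eq_convex_hull_vertices S_alpha_eq_diagonal_image[OF assms(2,3)] .
qed

lemma exists_unbalanced_vec_factorisation:
  fixes \<alpha> :: "nat^'n"
  assumes "prime p" "e + (\<Sum>i\<in>UNIV. \<alpha>$i) = m * CARD('n) + l" "l \<le> CARD('n)"
    and "2 \<le> e" "2 \<le> CARD('n)"
  shows "\<exists>x \<in> vec_factorisations (p ^ e).
           (\<chi> i. real p ^ (\<alpha>$i)) \<bullet> x \<noteq> balanced_power_sum (real p) CARD('n) l m"
proof -
  have "\<not> (\<forall>i j :: 'n. i = j)"
    using assms(5) card_le_Suc0_iff_eq[of "UNIV :: 'n set"] by auto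
  then obtain i j :: 'n where "i \<noteq> j"
    by blast
  define concentrated :: "'n \<Rightarrow> nat^'n" where "concentrated k = (\<chi> i'. if i' = k then e else 0)" for k
  have sum_concentrated: "(\<Sum>i'\<in>UNIV. concentrated k $ i') = e" for k
    by (simp add: concentrated_def)
  \<comment> \<open>Concentrating p^e at i or at j gives the exponents \<alpha>_j and \<alpha>_j + e at j,
      which cannot both lie in {m, m + 1} since e \<ge> 2.\<close>
  have "\<exists>k. \<not> (\<forall>i'. \<alpha>$i' + concentrated k $ i' = m \<or> \<alpha>$i' + concentrated k $ i' = Suc m)"
  proof (rule ccontr)
    assume "\<not> ?thesis"
    then have "\<alpha>$j + concentrated i $ j = m \<or> \<alpha>$j + concentrated i $ j = Suc m"
      and "\<alpha>$j + concentrated j $ j = m \<or> \<alpha>$j + concentrated j $ j = Suc m"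
      by blast+
    then show False
      using \<open>i \<noteq> j\<close> assms(4) by (auto simp: concentrated_def)
  qed
  then obtain k where "\<not> (\<forall>i'. \<alpha>$i' + concentrated k $ i' = m \<or> \<alpha>$i' + concentrated k $ i' = Suc m)"
    by blast
  then have "(\<chi> i. real p ^ (\<alpha>$i)) \<bullet> (\<chi> i. real p ^ (concentrated k $ i))
             \<noteq> balanced_power_sum (real p) CARD('n) l m"
    using vec_factorisation_weighted_sum_eq_iff[OF assms(1-3) sum_concentrated] by simp
  moreover have "(\<chi> i. real p ^ (concentrated k $ i)) \<in> vec_factorisations (p ^ e)"
    using vec_factorisations_prime_power[OF assms(1)] sum_concentrated by blast
  ultimately show ?thesis
    by blast
qed

lemma S_alpha_facet_of_factorisation_polytope:
  fixes \<alpha> :: "nat^'n"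
  assumes "prime p" "2 \<le> e" "2 \<le> CARD('n)" "1 \<le> l" "l < CARD('n)"
    and "e + (\<Sum>i\<in>UNIV. \<alpha>$i) = m * CARD('n) + l" "mu_of l e \<alpha> = int m" "\<forall>i. \<alpha>$i \<le> m"
  shows "convex hull (S_alpha p l e \<alpha>) facet_of factorisation_polytope (p ^ e)"
proof -
  define w where "w = (\<chi> i. real p ^ (\<alpha>$i))"
  define C where "C = balanced_power_sum (real p) CARD('n) l m"
  have S_face: "S_alpha p l e \<alpha> = {x \<in> vec_factorisations (p ^ e). w \<bullet> x = C}"
    unfolding w_def C_def using assms(1,5-8) by (intro S_alpha_eq_balanced_factorisations) auto
  have dim_S: "aff_dim (S_alpha p l e \<alpha>) = int CARD('n) - 1"
    using aff_dim_S_alpha[OF prime_gt_1_nat[OF assms(1)] assms(4,5,7,8)] .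
  have face: "convex hull (S_alpha p l e \<alpha>) face_of factorisation_polytope (p ^ e)"
    using factorisation_polytope_weighted_sum(2)[OF assms(1,6)] assms(5) by (simp add: S_face w_def C_def)
  have "S_alpha p l e \<alpha> \<noteq> {}"
  proof
    assume "S_alpha p l e \<alpha> = {}"
    then show False
      using dim_S assms(3) by simp
  qed
  then have nonempty: "convex hull (S_alpha p l e \<alpha>) \<noteq> {}"
    by simp
  have in_hyperplane: "convex hull (S_alpha p l e \<alpha>) \<subseteq> {x. w \<bullet> x = C}"
    by (intro hull_minimal) (auto simp: S_face convex_hyperplane)
  obtain x0 where x0: "x0 \<in> vec_factorisations (p ^ e)" "w \<bullet> x0 \<noteq> C"
    using exists_unbalanced_vec_factorisation[OF assms(1,6) _ assms(2,3)] assms(5)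
    by (auto simp: w_def C_def)
  have x0_in_polytope: "x0 \<in> factorisation_polytope (p ^ e)"
    unfolding factorisation_polytope_def using x0(1) by (rule hull_inc)
  show ?thesis
    by (rule facet_of_hyperplane_face[OF face nonempty in_hyperplane x0_in_polytope x0(2)])
       (simp add: aff_dim_convex_hull dim_S)
qed

theorem corollary3p4:
  fixes p e lam :: nat and \<alpha> :: "nat^'n"
  assumes "prime p" and "e \<ge> 2" and "CARD('n) \<ge> 2"
    and "1 \<le> lam" and "lam \<le> min e (CARD('n) - 1)"
    and "\<alpha> \<in> R_set lam e"
  shows "(\<forall>x \<in> factorisation_polytope (p ^ e).
            (\<Sum>i\<in>UNIV. real p ^ (\<alpha>$i) * x$i)
              \<ge> real lam * real p powi (mu_of lam e \<alpha> + 1)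
                + real (CARD('n) - lam) * real p powi (mu_of lam e \<alpha>))
      \<and> (\<forall>x \<in> S_alpha p lam e \<alpha>.
            (\<Sum>i\<in>UNIV. real p ^ (\<alpha>$i) * x$i)
              = real lam * real p powi (mu_of lam e \<alpha> + 1)
                + real (CARD('n) - lam) * real p powi (mu_of lam e \<alpha>))
      \<and> (\<forall>x \<in> S_alpha p lam e \<alpha>. x extreme_point_of factorisation_polytope (p ^ e))
      \<and> (convex hull (S_alpha p lam e \<alpha>)) facet_of factorisation_polytope (p ^ e)
      \<and> affinely_equivalent (hypersimplex lam) (convex hull (S_alpha p lam e \<alpha>))"
proof -
  have lam: "lam < CARD('n)" "lam \<le> CARD('n)"
    using assms(3,5) by auto
  obtain m where sum_\<alpha>: "e + (\<Sum>i\<in>UNIV. \<alpha>$i) = m * CARD('n) + lam"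
    and mu: "mu_of lam e \<alpha> = int m" and \<alpha>_le: "\<forall>i. \<alpha>$i \<le> m"
    using R_set_decomposition[OF assms(6) lam(1)] by blast
  define w where "w = (\<chi> i. real p ^ (\<alpha>$i))"
  define C where "C = balanced_power_sum (real p) CARD('n) lam m"
  have weighted_sum: "(\<Sum>i\<in>UNIV. real p ^ (\<alpha>$i) * x$i) = w \<bullet> x" for x :: "real^'n"
    by (simp add: w_def inner_vec_def)
  have "mu_of lam e \<alpha> + 1 = int (Suc m)"
    using mu by simp
  then have bound: "real lam * real p powi (mu_of lam e \<alpha> + 1)
                    + real (CARD('n) - lam) * real p powi (mu_of lam e \<alpha>) = C"
    by (simp only: mu power_int_of_nat C_def balanced_power_sum_def)
  have S_face: "S_alpha p lam e \<alpha> = {x \<in> vec_factorisations (p ^ e). w \<bullet> x = C}"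
    unfolding w_def C_def by (rule S_alpha_eq_balanced_factorisations[OF assms(1) sum_\<alpha> lam(2) mu \<alpha>_le])
  have "\<forall>x \<in> factorisation_polytope (p ^ e). C \<le> w \<bullet> x"
    using factorisation_polytope_weighted_sum(1)[OF assms(1) sum_\<alpha> lam(2)] by (simp add: w_def C_def)
  moreover have "\<forall>x \<in> S_alpha p lam e \<alpha>. w \<bullet> x = C \<and> x extreme_point_of factorisation_polytope (p ^ e)"
    unfolding S_face using vec_factorisation_extreme_point[OF assms(1)] by blast
  moreover note S_alpha_facet_of_factorisation_polytope[OF assms(1-4) lam(1) sum_\<alpha> mu \<alpha>_le]
  moreover note affinely_equivalent_hypersimplex_S_alpha[OF prime_gt_1_nat[OF assms(1)] mu \<alpha>_le]
  ultimately show ?thesis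
    unfolding weighted_sum bound by blast
qed

end
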